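(* Let $\Sigma$ be a finite alphabet and let $L_1, L_2 \subseteq \Sigma^*$ be regular languages. Then $L_1 \leftarrow L_2$ is regular.
   Context: For strings $x, y \in \Sigma^*$, the outfix-guided insertion of $y$ into $x$ is $x \leftarrow y = \{ x_1 u z v x_2 \mid x = x_1 u v x_2,\ y = u z v,\ u \neq \varepsilon,\ v \neq \varepsilon \}$. For languages, $L_1 \leftarrow L_2 = \bigcup_{x \in L_1, y \in L_2} x \leftarrow y$. *)

theory Defs
  imports Main
begin

datatype 'a rexp = Zero | One | Atom 'a | Plus "'a rexp" "'a rexp"
                 | Times "'a rexp" "'a rexp" | Star "'a rexp"

definition conc :: "'a list set \<Rightarrow> 'a list set \<Rightarrow> 'a list set" where
  "conc A B = {xs @ ys | xs ys. xs \<in> A \<and> ys \<in> B}"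

inductive_set star :: "'a list set \<Rightarrow> 'a list set" for A :: "'a list set" where
  star_Nil: "[] \<in> star A"
| star_app: "\<lbrakk> xs \<in> A; ys \<in> star A \<rbrakk> \<Longrightarrow> xs @ ys \<in> star A"

fun lang :: "'a rexp \<Rightarrow> 'a list set" where
  "lang Zero = {}"
| "lang One = {[]}"
| "lang (Atom a) = {[a]}"
| "lang (Plus r s) = lang r \<union> lang s"
| "lang (Times r s) = conc (lang r) (lang s)"
| "lang (Star r) = star (lang r)"

definition regular :: "'a list set \<Rightarrow> bool" where
  "regular L \<longleftrightarrow> (\<exists>r. lang r = L)"

definition ogi :: "'a list \<Rightarrow> 'a list \<Rightarrow> 'a list set" where
  "ogi x y = {x1 @ u @ z @ v @ x2 | x1 u z v x2.
               x = x1 @ u @ v @ x2 \<and> y = u @ z @ v \<and> u \<noteq> [] \<and> v \<noteq> []}"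

definition ogi_lang :: "'a list set \<Rightarrow> 'a list set \<Rightarrow> 'a list set" where
  "ogi_lang L1 L2 = (\<Union>x\<in>L1. \<Union>y\<in>L2. ogi x y)"

end

theory Submission
  imports Defs
begin

text \<open>
  A language over a finite alphabet is regular iff it has finitely many left quotients
  \<open>derivs w L = {v. w @ v \<in> L}\<close>; the quotients of a regular expression are bounded by
  structural induction, and conversely a language with finitely many quotients is the language
  of its quotient automaton, converted into a regular expression by McNaughton--Yamada.
  In particular regular languages are closed under intersection and complement.
  A word \<open>x\<^sub>1 u z v x\<^sub>2\<close> of \<open>L\<^sub>1 \<leftarrow> L\<^sub>2\<close> is then recognised by guessing the quotients of
  \<open>L\<^sub>1\<close> after \<open>x\<^sub>1\<close>, \<open>x\<^sub>1 u\<close>, \<open>x\<^sub>1 u v\<close> and of \<open>L\<^sub>2\<close> after \<open>u\<close>, \<open>u z\<close>: this writes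
  \<open>L\<^sub>1 \<leftarrow> L\<^sub>2\<close> as a finite union of concatenations of intersections of regular languages.
\<close>

definition derivs :: "'a list \<Rightarrow> 'a list set \<Rightarrow> 'a list set" where
  "derivs w L = {v. w @ v \<in> L}"

definition derivatives :: "'a list set \<Rightarrow> 'a list set set" where
  "derivatives L = range (\<lambda>w. derivs w L)"

lemma in_derivs_iff [simp]: "v \<in> derivs w L \<longleftrightarrow> w @ v \<in> L"
  by (simp add: derivs_def)

lemma derivs_Nil [simp]: "derivs [] L = L"
  by (simp add: derivs_def)

lemma derivs_append [simp]: "derivs (u @ v) L = derivs v (derivs u L)"
  by (simp add: derivs_def)

lemma derivs_Cons: "derivs (a # w) L = derivs w (derivs [a] L)"
  by (simp add: derivs_def)

lemma derivs_in_derivatives: "X \<in> derivatives L \<Longrightarrow> derivs w X \<in> derivatives L"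
  unfolding derivatives_def by (auto simp flip: derivs_append)

lemma derivatives_subset: "X \<in> derivatives L \<Longrightarrow> derivatives X \<subseteq> derivatives L"
  unfolding derivatives_def by (auto simp flip: derivs_append)

lemma derivs_in_closed_family:
  assumes "L \<in> F" and "\<And>X a. X \<in> F \<Longrightarrow> derivs [a] X \<in> F"
  shows "derivs w L \<in> F"
  using assms(1)
proof (induction w arbitrary: L)
  case (Cons a w)
  then show ?case using assms(2) by (metis derivs_Cons)
qed simp

lemma finite_derivativesI:
  assumes "finite F" and "L \<in> F" and "\<And>X a. X \<in> F \<Longrightarrow> derivs [a] X \<in> F"
  shows "finite (derivatives L)"
proof -
  have "derivatives L \<subseteq> F"
    unfolding derivatives_def using derivs_in_closed_family assms(2,3) by blast
  then show ?thesis using assms(1) finite_subset by blast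
qed

lemma finite_derivatives_pointwise:
  assumes "\<And>w. derivs w C = f (derivs w A) (derivs w B)"
    and "finite (derivatives A)" and "finite (derivatives B)"
  shows "finite (derivatives C)"
proof -
  have "derivatives C \<subseteq> case_prod f ` (derivatives A \<times> derivatives B)"
    unfolding derivatives_def using assms(1) by auto
  then show ?thesis using assms(2,3) by (meson finite_SigmaI finite_imageI finite_subset)
qed

lemma finite_derivatives_Un:
  "finite (derivatives A) \<Longrightarrow> finite (derivatives B) \<Longrightarrow> finite (derivatives (A \<union> B))"
  by (rule finite_derivatives_pointwise[of _ "(\<union>)" A B]) auto

lemma finite_derivatives_Int:
  "finite (derivatives A) \<Longrightarrow> finite (derivatives B) \<Longrightarrow> finite (derivatives (A \<inter> B))"
  by (rule finite_derivatives_pointwise[of _ "(\<inter>)" A B]) auto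

lemma finite_derivatives_Compl:
  assumes "finite (derivatives A)"
  shows "finite (derivatives (- A))"
proof -
  have "derivs w (- A) = - derivs w A" for w
    by auto
  then have "derivatives (- A) = uminus ` derivatives A"
    unfolding derivatives_def by (simp add: image_image)
  then show ?thesis using assms by simp
qed

lemma concI: "xs \<in> A \<Longrightarrow> ys \<in> B \<Longrightarrow> xs @ ys \<in> conc A B"
  by (auto simp: conc_def)

lemma concE:
  assumes "w \<in> conc A B"
  obtains xs ys where "w = xs @ ys" "xs \<in> A" "ys \<in> B"
  using assms by (auto simp: conc_def)

lemma conc_Nil_left [simp]: "conc {[]} A = A"
  by (simp add: conc_def)

lemma derivs_single_conc:
  "derivs [a] (conc A B) = conc (derivs [a] A) B \<union> (if [] \<in> A then derivs [a] B else {})"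
proof (intro set_eqI iffI)
  fix w assume "w \<in> derivs [a] (conc A B)"
  then obtain xs ys where "a # w = xs @ ys" "xs \<in> A" "ys \<in> B"
    by (auto simp: conc_def)
  then show "w \<in> conc (derivs [a] A) B \<union> (if [] \<in> A then derivs [a] B else {})"
    by (cases xs) (auto simp: conc_def)
next
  fix w assume "w \<in> conc (derivs [a] A) B \<union> (if [] \<in> A then derivs [a] B else {})"
  then show "w \<in> derivs [a] (conc A B)"
    by (auto simp: conc_def split: if_splits; metis append_Cons)
qed

lemma star_Cons_decomp:
  "xs \<in> star A \<Longrightarrow> xs = a # w \<Longrightarrow> \<exists>u v. w = u @ v \<and> a # u \<in> A \<and> v \<in> star A"
proof (induction arbitrary: w rule: star.induct)
  case (star_app xs ys)
  show ?case
  proof (cases xs)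
    case Nil
    then show ?thesis using star_app.IH star_app.prems by simp
  next
    case (Cons b u)
    then have "w = u @ ys" "a # u \<in> A" using star_app.hyps(1) star_app.prems by auto
    then show ?thesis using star_app.hyps(2) by blast
  qed
qed simp

lemma derivs_single_star: "derivs [a] (star A) = conc (derivs [a] A) (star A)"
proof (intro set_eqI iffI)
  fix w assume "w \<in> derivs [a] (star A)"
  then show "w \<in> conc (derivs [a] A) (star A)"
    using star_Cons_decomp[of "a # w" A a w] by (auto simp: conc_def)
next
  fix w assume "w \<in> conc (derivs [a] A) (star A)"
  then show "w \<in> derivs [a] (star A)"
    by (auto simp: conc_def intro: star.star_app[of "a # _", simplified])
qed

lemma derivs_Un [simp]: "derivs w (A \<union> B) = derivs w A \<union> derivs w B"
  by auto

lemma derivs_UN [simp]: "derivs w (\<Union>X\<in>Y. f X) = (\<Union>X\<in>Y. derivs w (f X))"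
  by auto

lemma derivs_Union [simp]: "derivs w (\<Union>Y) = \<Union>(derivs w ` Y)"
  by auto

lemma self_in_derivatives: "L \<in> derivatives L"
  unfolding derivatives_def by (metis derivs_Nil rangeI)

lemma finite_derivatives_conc:
  assumes "finite (derivatives A)" and "finite (derivatives B)"
  shows "finite (derivatives (conc A B))"
proof (rule finite_derivativesI)
  let ?F = "(\<lambda>(X, Y). conc X B \<union> \<Union>Y) ` (derivatives A \<times> Pow (derivatives B))"
  show "finite ?F" using assms by simp
  show "conc A B \<in> ?F"
    by (rule image_eqI[where x = "(A, {})"]) (auto simp: self_in_derivatives)
  fix Z a assume "Z \<in> ?F"
  then obtain X Y where XY: "X \<in> derivatives A" "Y \<subseteq> derivatives B"
    and Z: "Z = conc X B \<union> \<Union>Y" by blast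
  let ?Y' = "derivs [a] ` Y \<union> (if [] \<in> X then {derivs [a] B} else {})"
  have "derivs [a] Z = conc (derivs [a] X) B \<union> \<Union>?Y'"
    unfolding Z by (auto simp: derivs_single_conc)
  moreover have "derivs [a] X \<in> derivatives A"
    using XY(1) by (rule derivs_in_derivatives)
  moreover have "?Y' \<subseteq> derivatives B"
    using XY(2) by (auto intro: derivs_in_derivatives self_in_derivatives)
  ultimately show "derivs [a] Z \<in> ?F"
    by (intro image_eqI[where x = "(derivs [a] X, ?Y')"]) auto
qed

lemma finite_derivatives_star:
  assumes "finite (derivatives A)"
  shows "finite (derivatives (star A))"
proof (rule finite_derivativesI)
  let ?D = "{{[]}, {}} \<union> derivatives A"
  let ?F = "(\<lambda>Y. \<Union>X\<in>Y. conc X (star A)) ` Pow ?D"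
  show "finite ?F" using assms by simp
  show "star A \<in> ?F"
    by (rule image_eqI[where x = "{{[]}}"]) auto
  fix Z a assume "Z \<in> ?F"
  then obtain Y where Y: "Y \<subseteq> ?D" and Z: "Z = (\<Union>X\<in>Y. conc X (star A))" by blast
  let ?Y' = "derivs [a] ` Y \<union> (if \<exists>X\<in>Y. [] \<in> X then {derivs [a] A} else {})"
  have D_closed: "derivs [a] X \<in> ?D" if "X \<in> ?D" for X
    using that by (auto intro: derivs_in_derivatives)
  have "derivs [a] Z = (\<Union>X\<in>?Y'. conc X (star A))"
    unfolding Z by (auto simp: derivs_single_conc derivs_single_star split: if_splits)
  moreover have "?Y' \<subseteq> ?D"
    using Y D_closed by (auto intro: self_in_derivatives)
  ultimately show "derivs [a] Z \<in> ?F"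
    by (intro image_eqI[where x = ?Y']) auto
qed

lemma finite_derivatives_lang: "finite (derivatives (lang r))"
proof (induction r)
  case Zero
  show ?case by (rule finite_derivativesI[of "{{}}"]) auto
next
  case One
  show ?case by (rule finite_derivativesI[of "{{[]}, {}}"]) (auto simp: derivs_def)
next
  case (Atom b)
  show ?case by (rule finite_derivativesI[of "{{[b]}, {[]}, {}}"]) (auto simp: derivs_def)
next
  case (Plus r s)
  then show ?case by (simp add: finite_derivatives_Un)
next
  case (Times r s)
  then show ?case by (simp add: finite_derivatives_conc)
next
  case (Star r)
  then show ?case by (simp add: finite_derivatives_star)
qed

lemma regular_Un: "regular A \<Longrightarrow> regular B \<Longrightarrow> regular (A \<union> B)"
  unfolding regular_def by (metis lang.simps(4))

lemma regular_conc: "regular A \<Longrightarrow> regular B \<Longrightarrow> regular (conc A B)"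
  unfolding regular_def by (metis lang.simps(5))

lemma regular_star: "regular A \<Longrightarrow> regular (star A)"
  unfolding regular_def by (metis lang.simps(6))

lemma regular_UN:
  "finite I \<Longrightarrow> (\<And>i. i \<in> I \<Longrightarrow> regular (f i)) \<Longrightarrow> regular (\<Union>i\<in>I. f i)"
proof (induction I rule: finite_induct)
  case empty
  show ?case unfolding regular_def by (metis UN_empty lang.simps(1))
next
  case (insert i I)
  then show ?case by (simp add: regular_Un)
qed

lemma regular_singleton: "regular {w}"
proof (induction w)
  case Nil
  show ?case unfolding regular_def by (metis lang.simps(2))
next
  case (Cons a w)
  have "{a # w} = conc {[a]} {w}" by (simp add: conc_def)
  moreover have "regular {[a]}" unfolding regular_def by (metis lang.simps(3))
  ultimately show ?case using Cons regular_conc by metis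
qed

lemma regular_finite: "finite L \<Longrightarrow> regular L"
  by (metis UN_singleton regular_UN regular_singleton)

text \<open>
  Words leading from state \<open>p\<close> to state \<open>q\<close> of the quotient automaton all of whose intermediate
  states lie in \<open>S\<close>; induction on \<open>S\<close> yields McNaughton--Yamada's regular expressions.
\<close>

definition paths :: "'a list set \<Rightarrow> 'a list set \<Rightarrow> 'a list set set \<Rightarrow> 'a list set" where
  "paths p q S =
     {w. derivs w p = q \<and> (\<forall>k. 0 < k \<longrightarrow> k < length w \<longrightarrow> derivs (take k w) p \<in> S)}"

lemma paths_mono: "S \<subseteq> T \<Longrightarrow> paths p q S \<subseteq> paths p q T"
  unfolding paths_def by blast

lemma Nil_in_paths: "[] \<in> paths p p S"
  unfolding paths_def by simp

lemma regular_paths_empty: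
  fixes p q :: "('a::finite) list set"
  shows "regular (paths p q {})"
proof (rule regular_finite)
  have "paths p q {} \<subseteq> {w. set w \<subseteq> UNIV \<and> length w \<le> 1}"
    unfolding paths_def by (auto simp: not_le dest: spec[of _ 1])
  then show "finite (paths p q {})"
    using finite_lists_length_le[of "UNIV :: 'a set" 1] finite_subset by auto
qed

lemma append_in_paths:
  assumes "u \<in> paths p m S" and "v \<in> paths m q S" and "m \<in> S"
  shows "u @ v \<in> paths p q S"
  unfolding paths_def
proof (intro CollectI conjI allI impI)
  show "derivs (u @ v) p = q" using assms(1,2) unfolding paths_def by simp
  fix k assume k: "0 < k" "k < length (u @ v)"
  consider "k < length u" | "k = length u" | "length u < k" by linarith
  then show "derivs (take k (u @ v)) p \<in> S"
  proof cases
    case 1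
    then show ?thesis using assms(1) k unfolding paths_def by simp
  next
    case 2
    then show ?thesis using assms(1,3) unfolding paths_def by simp
  next
    case 3
    then have "derivs (take (k - length u) v) m \<in> S"
      using assms(2) k unfolding paths_def by simp
    then show ?thesis using assms(1) 3 unfolding paths_def by simp
  qed
qed

lemma star_paths_subset: "star (paths s s S) \<subseteq> paths s s (insert s S)"
proof
  fix w assume "w \<in> star (paths s s S)"
  then show "w \<in> paths s s (insert s S)"
  proof (induction rule: star.induct)
    case star_Nil
    show ?case by (rule Nil_in_paths)
  next
    case (star_app u v)
    then show ?case
      using append_in_paths paths_mono[of S "insert s S"] by blast
  qed
qed

lemma drop_in_paths:
  assumes "w \<in> paths p q S"
  shows "drop k w \<in> paths (derivs (take k w) p) q S"
  unfolding paths_def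
proof (intro CollectI conjI allI impI)
  show "derivs (drop k w) (derivs (take k w) p) = q"
    using assms unfolding paths_def by (simp flip: derivs_append)
  fix j assume "0 < j" "j < length (drop k w)"
  then have "derivs (take (k + j) w) p \<in> S"
    using assms unfolding paths_def by simp
  then show "derivs (take j (drop k w)) (derivs (take k w) p) \<in> S"
    by (simp add: take_add)
qed

lemma paths_first_visit:
  assumes "w \<in> paths p q (insert s S)" and "w \<notin> paths p q S"
  obtains u v where "w = u @ v" "u \<noteq> []" "u \<in> paths p s S" "v \<in> paths s q (insert s S)"
proof -
  let ?exit = "\<lambda>k. 0 < k \<and> k < length w \<and> derivs (take k w) p \<notin> S"
  have "\<exists>k. ?exit k" using assms unfolding paths_def by auto
  then obtain k where k: "?exit k" and before: "\<And>j. j < k \<Longrightarrow> \<not> ?exit j"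
    using exists_least_iff[of ?exit] by blast
  have s: "derivs (take k w) p = s"
    using assms(1) k unfolding paths_def by auto
  have "take k w \<in> paths p s S"
    unfolding paths_def using s k before by (auto simp: min_def)
  moreover have "drop k w \<in> paths s q (insert s S)"
    using drop_in_paths[OF assms(1), of k] s by simp
  ultimately show thesis
    using k by (intro that[of "take k w" "drop k w"]) auto
qed

lemma paths_loop: "w \<in> paths s q (insert s S) \<Longrightarrow> w \<in> conc (star (paths s s S)) (paths s q S)"
proof (induction "length w" arbitrary: w rule: less_induct)
  case less
  show ?case
  proof (cases "w \<in> paths s q S")
    case True
    then show ?thesis using concI[OF star.star_Nil True] by simp
  next
    case False
    then obtain u v where w: "w = u @ v" "u \<noteq> []" and u: "u \<in> paths s s S"
      and v: "v \<in> paths s q (insert s S)"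
      using paths_first_visit[OF less.prems False] by blast
    have "length v < length w" using w by simp
    then have "v \<in> conc (star (paths s s S)) (paths s q S)"
      using v by (rule less.hyps)
    then obtain x y where v: "v = x @ y" and x: "x \<in> star (paths s s S)" and y: "y \<in> paths s q S"
      by (rule concE)
    show ?thesis
      using concI[OF star.star_app[OF u x] y] w v by simp
  qed
qed

lemma paths_insert:
  "paths p q (insert s S) = paths p q S \<union> conc (paths p s S) (conc (star (paths s s S)) (paths s q S))"
proof (intro set_eqI iffI)
  fix w assume w: "w \<in> paths p q (insert s S)"
  show "w \<in> paths p q S \<union> conc (paths p s S) (conc (star (paths s s S)) (paths s q S))"
  proof (cases "w \<in> paths p q S")
    case False
    then obtain u v where "w = u @ v" and u: "u \<in> paths p s S" and v: "v \<in> paths s q (insert s S)"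
      using paths_first_visit[OF w False] by blast
    then show ?thesis using concI[OF u paths_loop[OF v]] by simp
  qed simp
next
  have lift: "paths p' q' S \<subseteq> paths p' q' (insert s S)" for p' q'
    by (rule paths_mono) (rule subset_insertI)
  fix w assume "w \<in> paths p q S \<union> conc (paths p s S) (conc (star (paths s s S)) (paths s q S))"
  then show "w \<in> paths p q (insert s S)"
  proof
    assume "w \<in> conc (paths p s S) (conc (star (paths s s S)) (paths s q S))"
    then obtain u x y where w: "w = u @ x @ y" and u: "u \<in> paths p s S"
      and x: "x \<in> star (paths s s S)" and y: "y \<in> paths s q S"
      by (elim concE) simp
    have "x @ y \<in> paths s q (insert s S)"
      using star_paths_subset x lift y by (intro append_in_paths[of x]) blast+
    with lift u show ?thesis
      unfolding w by (intro append_in_paths[of u]) blast+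
  qed (use lift in blast)
qed

lemma regular_paths:
  fixes S :: "('a::finite) list set set"
  assumes "finite S"
  shows "regular (paths p q S)"
  using assms
proof (induction S arbitrary: p q rule: finite_induct)
  case empty
  show ?case by (rule regular_paths_empty)
next
  case (insert s S)
  then show ?case
    unfolding paths_insert by (intro regular_Un regular_conc regular_star)
qed

definition reach :: "'a list set \<Rightarrow> 'a list set \<Rightarrow> 'a list set" where
  "reach A B = {w. derivs w A = B}"

lemma reach_eq_paths: "reach A B = paths A B (derivatives A)"
  unfolding reach_def paths_def derivatives_def by auto

lemma regular_iff_finite_derivatives:
  fixes L :: "('a::finite) list set"
  shows "regular L \<longleftrightarrow> finite (derivatives L)"
proof
  assume "regular L"
  then show "finite (derivatives L)"
    unfolding regular_def using finite_derivatives_lang by blast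
next
  assume fin: "finite (derivatives L)"
  have "L = (\<Union>q\<in>{q \<in> derivatives L. [] \<in> q}. reach L q)"
    unfolding reach_def derivatives_def by auto
  moreover have "regular (\<Union>q\<in>{q \<in> derivatives L. [] \<in> q}. reach L q)"
    unfolding reach_eq_paths using fin by (intro regular_UN regular_paths) auto
  ultimately show "regular L" by simp
qed

lemma regular_reach:
  fixes A :: "('a::finite) list set"
  assumes "regular A"
  shows "regular (reach A B)"
proof -
  have "finite (derivatives A)" using assms regular_iff_finite_derivatives by blast
  then show ?thesis unfolding reach_eq_paths by (rule regular_paths)
qed

lemma regular_Int:
  fixes A B :: "('a::finite) list set"
  shows "regular A \<Longrightarrow> regular B \<Longrightarrow> regular (A \<inter> B)"
  by (simp add: regular_iff_finite_derivatives finite_derivatives_Int)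

lemma regular_Diff:
  fixes A B :: "('a::finite) list set"
  shows "regular A \<Longrightarrow> regular B \<Longrightarrow> regular (A - B)"
  by (simp add: regular_iff_finite_derivatives finite_derivatives_Int finite_derivatives_Compl
      Diff_eq)

lemma regular_if_in_derivatives:
  fixes L :: "('a::finite) list set"
  assumes "regular L" and "X \<in> derivatives L"
  shows "regular X"
  using assms derivatives_subset finite_subset regular_iff_finite_derivatives by metis

lemma ogi_langI:
  "x1 @ u @ v @ x2 \<in> L1 \<Longrightarrow> u @ z @ v \<in> L2 \<Longrightarrow> u \<noteq> [] \<Longrightarrow> v \<noteq> [] \<Longrightarrow>
    x1 @ u @ z @ v @ x2 \<in> ogi_lang L1 L2"
  unfolding ogi_lang_def ogi_def by fastforce

lemma ogi_langE:
  assumes "w \<in> ogi_lang L1 L2"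
  obtains x1 u z v x2 where "w = x1 @ u @ z @ v @ x2"
    and "x1 @ u @ v @ x2 \<in> L1" and "u @ z @ v \<in> L2" and "u \<noteq> []" and "v \<noteq> []"
  using assms unfolding ogi_lang_def ogi_def by blast

lemma ogi_lang_eq_UN:
  "ogi_lang L1 L2 =
    (\<Union>(q1, q2, q3, r1, r2) \<in> derivatives L1 \<times> derivatives L1 \<times> derivatives L1 \<times>
                               derivatives L2 \<times> derivatives L2.
      conc (reach L1 q1) (conc (reach q1 q2 \<inter> reach L2 r1 - {[]})
        (conc (reach r1 r2) (conc (reach q2 q3 \<inter> r2 - {[]}) q3))))"
  (is "_ = (\<Union>i\<in>?I. ?F i)")
proof (intro set_eqI iffI)
  fix w assume "w \<in> ogi_lang L1 L2"
  then obtain x1 u z v x2 where w: "w = x1 @ u @ z @ v @ x2"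
    and "x1 @ u @ v @ x2 \<in> L1" and "u @ z @ v \<in> L2" and "u \<noteq> []" and "v \<noteq> []"
    by (rule ogi_langE)
  let ?q1 = "derivs x1 L1" and ?r1 = "derivs u L2"
  let ?q2 = "derivs u ?q1" and ?r2 = "derivs z ?r1"
  let ?q3 = "derivs v ?q2"
  have "(?q1, ?q2, ?q3, ?r1, ?r2) \<in> ?I"
    unfolding derivatives_def by (simp flip: derivs_append)
  moreover have "w \<in> ?F (?q1, ?q2, ?q3, ?r1, ?r2)"
    unfolding w prod.case by (intro concI) (simp_all add: reach_def \<open>u \<noteq> []\<close> \<open>v \<noteq> []\<close>
      \<open>x1 @ u @ v @ x2 \<in> L1\<close> \<open>u @ z @ v \<in> L2\<close>)
  ultimately show "w \<in> (\<Union>i\<in>?I. ?F i)" by blast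
next
  fix w assume "w \<in> (\<Union>i\<in>?I. ?F i)"
  then obtain i where "w \<in> ?F i" by blast
  moreover obtain q1 q2 q3 r1 r2 where "i = (q1, q2, q3, r1, r2)" by (rule prod_cases5)
  ultimately show "w \<in> ogi_lang L1 L2"
    by (clarsimp simp: reach_def conc_def) (rule ogi_langI)
qed

theorem lemma4p1:
  fixes L1 L2 :: "('a::finite) list set"
  assumes "regular L1" and "regular L2"
  shows "regular (ogi_lang L1 L2)"
proof -
  have "finite (derivatives L1)" and "finite (derivatives L2)"
    using assms regular_iff_finite_derivatives by blast+
  moreover have "regular X" if "X \<in> derivatives L1 \<union> derivatives L2" for X
    using that assms regular_if_in_derivatives by blast
  ultimately show ?thesis
    unfolding ogi_lang_eq_UN using assms
    by (intro regular_UN) (auto intro!: regular_conc regular_Int regular_Diff regular_reach regular_singleton)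
qed

end
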